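(* Let $k\ge 16$, $n=2^k$, $t=\lceil 2\log k\rceil$, and let $P$ be an isothetic drawing of the Horton set of $n$ points with slab $R$ as in the context. Then either $P$ has size at least $n^{\frac12\log n}$, or there exist vertical lines $\ell_1,\ell_2,\ell_3,\ell_4$, ordered from left to right and all contained in the interior of $R$, such that exactly $2^{k-t}$ points of $P$ lie between $\ell_1$ and $\ell_2$, exactly $2^{k-t}$ points of $P$ lie between $\ell_3$ and $\ell_4$, and, writing $d_1$ for the distance between $\ell_1$ and $\ell_2$ and $d_2$ for the distance between $\ell_3$ and $\ell_4$, we have $\frac12\le d_1/d_2\le 2$.
   Context: All logarithms are base 2. For a finite set $S$ of points in the plane with pairwise distinct $x$-coordinates, list its points in increasing order of $x$-coordinate as $p_0,\dots,p_{|S|-1}$ and set $S_{\mathrm{even}}=\{p_0,p_2,\dots\}$, $S_{\mathrm{odd}}=\{p_1,p_3,\dots\}$. For point sets $X,Y$, $X$ is high above $Y$ if every line through two points of $X$ lies strictly above every point of $Y$ and every line through two points of $Y$ lies strictly below every point of $X$. A Horton set of $2^k$ points is defined recursively: a set $H$ of $2^k$ points, no three collinear, with pairwise distinct $x$-coordinates, such that for $k=0$ it is a single point and for $k\ge1$ both $H_{\mathrm{even}}$ and $H_{\mathrm{odd}}$ are Horton sets of $2^{k-1}$ points and $H_{\mathrm{odd}}$ is high above $H_{\mathrm{even}}$. An isothetic drawing of the Horton set of $n=2^k$ points is a Horton set of $n$ points all of whose points have integer coordinates. The size of a set of points is the maximum absolute value of the coordinates of its points. With $p_0,\dots,p_{n-1}$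 the points of $P$ sorted by $x$-coordinate, $R$ is the closed vertical slab bounded by the vertical lines through $p_{n/4}$ and $p_{3n/4-1}$. *)

theory Defs
  imports Complex_Main
begin

type_synonym point = "real \<times> real"

text \<open>Number of points of S with strictly smaller x-coordinate (the index of p in the
  x-sorted order, when x-coordinates are pairwise distinct).\<close>
definition xrank :: "point set \<Rightarrow> point \<Rightarrow> nat" where
  "xrank S p = card {q \<in> S. fst q < fst p}"

text \<open>The i-th point p_i of S in increasing order of x-coordinate (0-based).\<close>
definition xpt :: "point set \<Rightarrow> nat \<Rightarrow> point" where
  "xpt S i = (THE p. p \<in> S \<and> xrank S p = i)"

definition S_even :: "point set \<Rightarrow> point set" where
  "S_even S = {p \<in> S. even (xrank S p)}"

definition S_odd :: "point set \<Rightarrow> point set" where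
  "S_odd S = {p \<in> S. odd (xrank S p)}"

definition distinct_x :: "point set \<Rightarrow> bool" where
  "distinct_x S \<longleftrightarrow> (\<forall>p\<in>S. \<forall>q\<in>S. fst p = fst q \<longrightarrow> p = q)"

definition collinear3 :: "point \<Rightarrow> point \<Rightarrow> point \<Rightarrow> bool" where
  "collinear3 p q r \<longleftrightarrow>
     (fst q - fst p) * (snd r - snd p) = (snd q - snd p) * (fst r - fst p)"

definition no_three_collinear :: "point set \<Rightarrow> bool" where
  "no_three_collinear S \<longleftrightarrow>
     (\<forall>p\<in>S. \<forall>q\<in>S. \<forall>r\<in>S. p \<noteq> q \<and> p \<noteq> r \<and> q \<noteq> r \<longrightarrow> \<not> collinear3 p q r)"

definition line_above :: "point \<Rightarrow> point \<Rightarrow> point \<Rightarrow> bool" where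
  "line_above p q r \<longleftrightarrow> fst p \<noteq> fst q \<and>
     snd r < snd p + (snd q - snd p) / (fst q - fst p) * (fst r - fst p)"

definition line_below :: "point \<Rightarrow> point \<Rightarrow> point \<Rightarrow> bool" where
  "line_below p q r \<longleftrightarrow> fst p \<noteq> fst q \<and>
     snd r > snd p + (snd q - snd p) / (fst q - fst p) * (fst r - fst p)"

definition high_above :: "point set \<Rightarrow> point set \<Rightarrow> bool" where
  "high_above X Y \<longleftrightarrow>
     (\<forall>p\<in>X. \<forall>q\<in>X. p \<noteq> q \<longrightarrow> (\<forall>r\<in>Y. line_above p q r)) \<and>
     (\<forall>p\<in>Y. \<forall>q\<in>Y. p \<noteq> q \<longrightarrow> (\<forall>r\<in>X. line_below p q r))"

fun horton :: "nat \<Rightarrow> point set \<Rightarrow> bool" where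
  "horton 0 H \<longleftrightarrow> card H = 1 \<and> no_three_collinear H \<and> distinct_x H"
| "horton (Suc k) H \<longleftrightarrow> finite H \<and> card H = 2 ^ Suc k \<and> no_three_collinear H \<and> distinct_x H
     \<and> horton k (S_even H) \<and> horton k (S_odd H) \<and> high_above (S_odd H) (S_even H)"

definition isothetic_horton :: "nat \<Rightarrow> point set \<Rightarrow> bool" where
  "isothetic_horton k P \<longleftrightarrow> horton k P \<and> (\<forall>p\<in>P. fst p \<in> \<int> \<and> snd p \<in> \<int>)"

definition point_set_size :: "point set \<Rightarrow> real" where
  "point_set_size S = Max ((\<lambda>p. max \<bar>fst p\<bar> \<bar>snd p\<bar>) ` S)"

definition strip_count :: "point set \<Rightarrow> real \<Rightarrow> real \<Rightarrow> nat" where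
  "strip_count P a b = card {p \<in> P. a \<le> fst p \<and> fst p \<le> b}"

end

theory Submission imports Defs begin

text \<open>Only the order and the integrality of the x-coordinates matter, not the Horton property.
  Strictly between p(n/4) and p(3n/4 - 1) lie m = 2^(t-1) - 1 disjoint runs of s = 2^(k-t)
  consecutive points. If no two of the strips spanned by these runs have widths within a factor 2
  of each other, the sorted widths more than double at every step; as integer coordinates make
  every width at least s - 1, the widest strip has width at least 2^(m-1) (s - 1). The size of P is
  at least half of any width, and k^2 <= 2^t turns this bound into 2^(k^2/2) = n^((log n)/2).\<close>

lemma horton_finite_card_distinct_x:
  "horton k P \<Longrightarrow> finite P \<and> card P = 2 ^ k \<and> distinct_x P"
  by (cases k) (auto intro: card_ge_0_finite)

lemma distinct_x_enumeration:
  assumes fin: "finite P" and dx: "distinct_x P" and card: "card P = n"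
  obtains f where "\<And>i j. i < j \<Longrightarrow> j < n \<Longrightarrow> f i < f j"
    and "fst ` P = f ` {..<n}"
    and "\<And>i. i < n \<Longrightarrow> fst (xpt P i) = f i"
    and "\<And>a b. a \<le> b \<Longrightarrow> b < n \<Longrightarrow> strip_count P (f a) (f b) = b - a + 1"
proof -
  have inj: "inj_on fst P"
    using dx unfolding distinct_x_def inj_on_def by blast
  obtain l where l: "sorted_wrt (<) l" "set l = fst ` P" "length l = n"
    using sorted_list_of_set.finite_set_strict_sorted[of "fst ` P"] fin card card_image[OF inj]
    by auto
  define f where "f i = l ! i" for i
  have mono: "f i < f j" if "i < j" "j < n" for i j
    using l that unfolding f_def sorted_wrt_iff_nth_less by auto
  have less_iff: "f i < f j \<longleftrightarrow> i < j" if "i < n" "j < n" for i j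
    by (metis mono that linorder_neqE_nat order_less_asym order_less_irrefl)
  have le_iff: "f i \<le> f j \<longleftrightarrow> i \<le> j" if "i < n" "j < n" for i j
    using less_iff[OF that(2,1)] by (simp add: not_less[symmetric])
  have image: "fst ` P = f ` {..<n}"
    using l unfolding f_def by (metis atLeast_upt map_nth set_map)
  have inj_f: "inj_on f {..<n}"
    by (rule inj_onI) (simp add: eq_iff le_iff)
  have count: "card {p \<in> P. Q (fst p)} = card {i \<in> {..<n}. Q (f i)}" for Q
  proof -
    have "fst ` {p \<in> P. Q (fst p)} = {x \<in> fst ` P. Q x}" by blast
    also have "\<dots> = f ` {i \<in> {..<n}. Q (f i)}" unfolding image by blast
    finally have "fst ` {p \<in> P. Q (fst p)} = f ` {i \<in> {..<n}. Q (f i)}" .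
    moreover have "card (fst ` {p \<in> P. Q (fst p)}) = card {p \<in> P. Q (fst p)}"
      by (rule card_image) (rule inj_on_subset[OF inj], auto)
    moreover have "card (f ` {i \<in> {..<n}. Q (f i)}) = card {i \<in> {..<n}. Q (f i)}"
      by (rule card_image) (rule inj_on_subset[OF inj_f], auto)
    ultimately show ?thesis by simp
  qed
  have rank: "xrank P p = j" if "p \<in> P" "fst p = f j" "j < n" for p j
  proof -
    have "{i \<in> {..<n}. f i < f j} = {..<j}"
      using less_iff that by auto
    then show ?thesis
      unfolding xrank_def using count[of "\<lambda>x. x < f j"] that by simp
  qed
  have xpt: "fst (xpt P i) = f i" if "i < n" for i
  proof -
    have "f i \<in> fst ` P" using image that by simp
    then obtain p where p: "p \<in> P" "fst p = f i" by force
    have "xpt P i = p" unfolding xpt_def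
    proof (rule the_equality)
      show "p \<in> P \<and> xrank P p = i" using rank[OF p that] p by simp
      fix p' assume p': "p' \<in> P \<and> xrank P p' = i"
      then have "fst p' \<in> f ` {..<n}" unfolding image[symmetric] by simp
      then obtain j where j: "j < n" "fst p' = f j" by force
      with p' have "j = i" using rank[of p' j] by simp
      with j p p' dx show "p' = p" unfolding distinct_x_def by metis
    qed
    with p show ?thesis by simp
  qed
  have strip: "strip_count P (f a) (f b) = b - a + 1" if "a \<le> b" "b < n" for a b
  proof -
    have "{i \<in> {..<n}. f a \<le> f i \<and> f i \<le> f b} = {a..b}"
      using le_iff that by auto
    then show ?thesis
      unfolding strip_count_def using count[of "\<lambda>x. f a \<le> x \<and> x \<le> f b"] that by simp
  qed
  show thesis using that mono image xpt strip by blast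
qed

lemma less_imp_mult_add_le: "i < m \<Longrightarrow> i * s + s \<le> (m::nat) * s"
  by (metis Suc_leI mult_Suc mult_le_mono1 add.commute)

lemma integer_increasing_gap:
  fixes f :: "nat \<Rightarrow> real"
  assumes mono: "\<And>i j. i < j \<Longrightarrow> j < n \<Longrightarrow> f i < f j"
    and int: "\<And>i. i < n \<Longrightarrow> f i \<in> \<int>"
  shows "a \<le> b \<Longrightarrow> b < n \<Longrightarrow> real (b - a) \<le> f b - f a"
proof (induction b rule: dec_induct)
  case (step b)
  have "f b + 1 \<le> f (Suc b)"
    using int[of b] int[of "Suc b"] mono[of b "Suc b"] step.prems
    by (auto elim!: Ints_cases)
  with step show ?case by (simp add: Suc_diff_le)
qed simp

lemma Max_ge_if_doubling:
  fixes W :: "real set"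
  assumes "finite W" "W \<noteq> {}" "\<And>x. x \<in> W \<Longrightarrow> c \<le> x"
    and "\<And>x y. x \<in> W \<Longrightarrow> y \<in> W \<Longrightarrow> x < y \<Longrightarrow> 2 * x < y"
  shows "2 ^ (card W - 1) * c \<le> Max W"
  using assms
proof (induction "card W" arbitrary: W rule: less_induct)
  case less
  define M where "M = Max W"
  have M: "M \<in> W" using less.prems M_def by simp
  show ?case
  proof (cases "W - {M} = {}")
    case True
    then have "W = {M}" using M by blast
    then show ?thesis using less.prems by simp
  next
    case False
    let ?W = "W - {M}"
    have "card ?W \<noteq> 0" using less.prems(1) False by simp
    moreover have "card ?W = card W - 1" using M by simp
    ultimately have card: "card W = Suc (card ?W)" "card ?W \<noteq> 0" by simp_all
    have IH: "2 ^ (card ?W - 1) * c \<le> Max ?W"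
      using less card False by (intro less.hyps) auto
    have "Max ?W \<in> W" "Max ?W < M"
      using Max_in[of ?W] Max_ge[of W] less.prems(1) False M_def by fastforce+
    then have "2 * Max ?W < M" using less.prems(4) M by blast
    moreover have "card W - 1 = Suc (card ?W - 1)" using card by simp
    ultimately show ?thesis using IH M_def by simp
  qed
qed

lemma comparable_pair_or_large:
  fixes w :: "nat \<Rightarrow> real"
  assumes "0 < m" and pos: "\<And>i. i < m \<Longrightarrow> 0 < w i" and lower: "\<And>i. i < m \<Longrightarrow> c \<le> w i"
  shows "(\<exists>i j. i < j \<and> j < m \<and> 1/2 \<le> w i / w j \<and> w i / w j \<le> 2)
    \<or> (\<exists>i<m. 2 ^ (m - 1) * c \<le> w i)" (is "?comparable \<or> _")
proof (cases ?comparable)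
  case incomparable: False
  have far: "2 * w i < w j" if "i < m" "j < m" "w i < w j" for i j
  proof (cases i j rule: linorder_cases)
    case less
    with incomparable that have "\<not> (1/2 \<le> w i / w j \<and> w i / w j \<le> 2)" by blast
    moreover have "w i / w j \<le> 2" using that pos[of j] by (simp add: divide_le_eq)
    ultimately show ?thesis using pos[of j] that by (simp add: le_divide_eq)
  next
    case greater
    with incomparable that have "\<not> (1/2 \<le> w j / w i \<and> w j / w i \<le> 2)" by blast
    moreover have "1/2 \<le> w j / w i" using that pos[of i] by (simp add: le_divide_eq)
    ultimately show ?thesis using pos[of i] that by (simp add: divide_le_eq)
  qed (use that in simp)
  have inj: "inj_on w {..<m}"
  proof (rule inj_onI, rule ccontr)
    fix i j assume ij: "i \<in> {..<m}" "j \<in> {..<m}" "w i = w j" "i \<noteq> j"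
    then have "w i / w j = 1" "w j / w i = 1" using pos[of j] by simp_all
    then have "1/2 \<le> w i / w j \<and> w i / w j \<le> 2" "1/2 \<le> w j / w i \<and> w j / w i \<le> 2"
      by simp_all
    with ij incomparable show False by (metis lessThan_iff linorder_neqE_nat)
  qed
  let ?W = "w ` {..<m}"
  have "2 ^ (card ?W - 1) * c \<le> Max ?W"
  proof (rule Max_ge_if_doubling)
    show "2 * x < y" if "x \<in> ?W" "y \<in> ?W" "x < y" for x y
      using that far by blast
  qed (use \<open>0 < m\<close> lower in auto)
  moreover have "Max ?W \<in> ?W" using \<open>0 < m\<close> by (intro Max_in) auto
  ultimately show ?thesis
    using card_image[OF inj] by auto
qed simp

lemma integer_blocks_comparable_or_wide:
  fixes f :: "nat \<Rightarrow> real" and lo s m N :: nat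
  assumes mono: "\<And>i j. i < j \<Longrightarrow> j < N \<Longrightarrow> f i < f j"
    and int: "\<And>i. i < N \<Longrightarrow> f i \<in> \<int>"
    and "0 < m" "2 \<le> s" and fit: "lo + m * s \<le> N"
  defines "w i \<equiv> f (lo + i * s + (s - 1)) - f (lo + i * s)"
  shows "(\<exists>i j. i < j \<and> j < m \<and> 1/2 \<le> w i / w j \<and> w i / w j \<le> 2)
    \<or> (\<exists>i<m. 2 ^ (m - 1) * (real s - 1) \<le> w i)"
proof (rule comparable_pair_or_large)
  fix i assume "i < m"
  then have "lo + i * s + s \<le> N"
    using fit less_imp_mult_add_le[of i m s] by linarith
  then have "real s - 1 \<le> w i"
    using integer_increasing_gap[where f = f and n = N, OF mono int,
        where a = "lo + i * s" and b = "lo + i * s + (s - 1)"] \<open>2 \<le> s\<close>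
    unfolding w_def by simp
  then show "real s - 1 \<le> w i" "0 < w i" using \<open>2 \<le> s\<close> by simp_all
qed fact

lemma strips_comparable_or_wide:
  assumes "finite P" "distinct_x P" "card P = N" and int: "\<forall>p\<in>P. fst p \<in> \<int>"
    and "0 < m" "2 \<le> s" and fit: "l + 1 + m * s \<le> r" "r < N"
  shows "(\<exists>a1 a2 a3 a4. fst (xpt P l) < a1 \<and> a1 < a2 \<and> a2 < a3 \<and> a3 < a4 \<and>
            a4 < fst (xpt P r) \<and> strip_count P a1 a2 = s \<and> strip_count P a3 a4 = s \<and>
            1/2 \<le> (a2 - a1) / (a4 - a3) \<and> (a2 - a1) / (a4 - a3) \<le> 2)
    \<or> (\<exists>p\<in>P. \<exists>p'\<in>P. 2 ^ (m - 1) * (real s - 1) \<le> fst p' - fst p)"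
proof -
  obtain f where mono: "\<And>i j. i < j \<Longrightarrow> j < N \<Longrightarrow> f i < f j"
    and image: "fst ` P = f ` {..<N}"
    and xpt: "\<And>i. i < N \<Longrightarrow> fst (xpt P i) = f i"
    and strip: "\<And>a b. a \<le> b \<Longrightarrow> b < N \<Longrightarrow> strip_count P (f a) (f b) = b - a + 1"
    using distinct_x_enumeration[OF assms(1-3)] by blast
  have f_int: "f i \<in> \<int>" if "i < N" for i
  proof -
    have "f i \<in> fst ` P" using image that by simp
    then show ?thesis using int by force
  qed
  let ?b = "\<lambda>i. l + 1 + i * s" and ?e = "\<lambda>i. l + 1 + i * s + (s - 1)"
  have block_end: "?e i < r" if "i < m" for i
    using fit \<open>2 \<le> s\<close> less_imp_mult_add_le[OF that, of s] by linarith
  have "l + 1 + m * s \<le> N" using fit by simp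
  from integer_blocks_comparable_or_wide[where f = f and N = N, OF mono f_int \<open>0 < m\<close> \<open>2 \<le> s\<close> this]
  consider (comparable) i j where "i < j" "j < m"
      "1/2 \<le> (f (?e i) - f (?b i)) / (f (?e j) - f (?b j))"
      "(f (?e i) - f (?b i)) / (f (?e j) - f (?b j)) \<le> 2"
    | (wide) i where "i < m" "2 ^ (m - 1) * (real s - 1) \<le> f (?e i) - f (?b i)"
    by blast
  then show ?thesis
  proof cases
    case comparable
    have lt: "f x < f y" if "x < y" "y \<le> r" for x y
      by (rule mono) (use that fit(2) in linarith)+
    have "?e i < ?b j"
      using \<open>2 \<le> s\<close> less_imp_mult_add_le[OF \<open>i < j\<close>, of s] by linarith
    moreover have "?e i < r" "?e j < r" using block_end comparable by simp_all
    ultimately have "f l < f (?b i)" "f (?b i) < f (?e i)" "f (?e i) < f (?b j)"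
      "f (?b j) < f (?e j)" "f (?e j) < f r"
      using \<open>2 \<le> s\<close> by (auto intro!: lt)
    moreover have "strip_count P (f (?b i)) (f (?e i)) = s" "strip_count P (f (?b j)) (f (?e j)) = s"
      using strip \<open>?e i < r\<close> \<open>?e j < r\<close> fit(2) \<open>2 \<le> s\<close> by simp_all
    moreover have "fst (xpt P l) = f l" "fst (xpt P r) = f r" using xpt fit by simp_all
    ultimately show ?thesis using comparable(3,4) by (intro disjI1) metis
  next
    case wide
    then have "?e i < N" using block_end fit(2) by (meson less_trans)
    then have "f (?b i) \<in> fst ` P" "f (?e i) \<in> fst ` P" using image by auto
    then obtain p p' where "p \<in> P" "fst p = f (?b i)" "p' \<in> P" "fst p' = f (?e i)" by force
    then show ?thesis using wide(2) by (intro disjI2) force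
  qed
qed

lemma fst_diff_le_twice_point_set_size:
  assumes "finite P" "p \<in> P" "p' \<in> P"
  shows "fst p' - fst p \<le> 2 * point_set_size P"
proof -
  have "\<bar>fst q\<bar> \<le> point_set_size P" if "q \<in> P" for q
    unfolding point_set_size_def using assms(1) that
    by (intro order_trans[OF max.cobounded1 Max_ge]) auto
  from this[OF assms(2)] this[OF assms(3)] show ?thesis by linarith
qed

lemma square_less_power2: "16 \<le> k \<Longrightarrow> (k::nat) ^ 2 < 2 ^ (k - 5)"
proof (induction k rule: nat_induct_at_least)
  case (Suc k)
  have "k * 16 \<le> k * k" using Suc.hyps by (rule mult_le_mono2)
  moreover have "(Suc k) ^ 2 = k * k + 2 * k + 1" "2 * k ^ 2 = 2 * (k * k)"
    by (simp_all add: power2_eq_square)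
  ultimately have "(Suc k) ^ 2 \<le> 2 * k ^ 2" using Suc.hyps by linarith
  also have "\<dots> < 2 ^ Suc (k - 5)" using Suc by simp
  finally show ?case using Suc_diff_le[of 5 k] Suc.hyps by simp
qed simp

lemma ceiling_two_log_bounds:
  assumes "16 \<le> k"
  defines "t \<equiv> nat \<lceil>2 * log 2 (real k)\<rceil>"
  shows "real k ^ 2 \<le> 2 ^ t" "t + 5 \<le> k" "8 \<le> t"
proof -
  have k: "0 < real k" using assms by simp
  have log_sq: "2 * log 2 (real k) = log 2 (real k ^ 2)" using k by (simp add: log_nat_power)
  have "real k ^ 2 < 2 ^ (k - 5)"
    using square_less_power2[OF assms(1)] by (metis of_nat_less_iff of_nat_numeral of_nat_power)
  then have "2 * log 2 (real k) < real (k - 5)"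
    unfolding log_sq using k by (simp add: log_less_iff powr_realpow)
  then show "t + 5 \<le> k" unfolding t_def using assms(1) by linarith
  have "2 * log 2 (real k) \<le> real t"
    unfolding t_def by (rule real_nat_ceiling_ge)
  then have "2 powr (2 * log 2 (real k)) \<le> 2 powr real t" by simp
  then show sq: "real k ^ 2 \<le> 2 ^ t"
    unfolding log_sq using k by (simp add: powr_realpow)
  have "(2::real) ^ 8 \<le> real k ^ 2" using assms(1) power_mono[of 16 "real k" 2] by simp
  then have "(2::real) ^ 8 \<le> 2 ^ t" using sq by linarith
  then show "8 \<le> t" by (rule power_le_imp_le_exp[rotated]) simp
qed

lemma size_threshold_le:
  assumes "2 \<le> t" "t + 4 \<le> k" "real k ^ 2 \<le> 2 ^ t"
  shows "real (2 ^ k) powr ((1/2) * log 2 (real (2 ^ k)))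
    \<le> 2 ^ (2 ^ (t - 1) - 2) * (real (2 ^ (k - t)) - 1) / 2"
proof -
  have "real (2 ^ k) powr ((1/2) * log 2 (real (2 ^ k))) = 2 powr (real k ^ 2 / 2)"
    by (simp add: powr_realpow[symmetric] powr_powr power2_eq_square)
  also have "\<dots> \<le> 2 powr real (2 ^ (t - 1))"
  proof -
    have "(2::real) ^ t = 2 * 2 ^ (t - 1)" using assms(1) by (simp add: power_Suc[symmetric])
    then show ?thesis using assms(3) by simp
  qed
  also have "\<dots> = 2 ^ (2 ^ (t - 1))" by (rule powr_realpow) simp
  also have "\<dots> \<le> 2 ^ (2 ^ (t - 1) - 2 + (k - t - 2))"
  proof (rule power_increasing)
    have "(2::nat) ^ 1 \<le> 2 ^ (t - 1)" using assms(1) by (intro power_increasing) auto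
    then show "2 ^ (t - 1) \<le> 2 ^ (t - 1) - 2 + (k - t - 2)" using assms(2) by simp
  qed simp
  also have "\<dots> = 2 ^ (2 ^ (t - 1) - 2) * 2 ^ (k - t - 1) / 2"
  proof -
    have "k - t - 1 = Suc (k - t - 2)" using assms(2) by simp
    then have "(2::real) ^ (k - t - 1) = 2 * 2 ^ (k - t - 2)" by (metis power_Suc)
    then show ?thesis unfolding power_add by simp
  qed
  also have "\<dots> \<le> 2 ^ (2 ^ (t - 1) - 2) * (real (2 ^ (k - t)) - 1) / 2"
  proof -
    have "k - t = Suc (k - t - 1)" using assms(2) by simp
    then have "(2::real) ^ (k - t) = 2 * 2 ^ (k - t - 1)" by (metis power_Suc)
    moreover have "(1::real) \<le> 2 ^ (k - t - 1)" by simp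
    ultimately show ?thesis by (simp add: divide_right_mono)
  qed
  finally show ?thesis .
qed

lemma runs_fit_between_quartiles:
  fixes k t :: nat
  assumes "2 \<le> t" "t < k"
  defines "n \<equiv> (2::nat) ^ k" and "m \<equiv> (2::nat) ^ (t - 1) - 1" and "s \<equiv> (2::nat) ^ (k - t)"
  shows "0 < m" "2 \<le> s" "n div 4 + 1 + m * s \<le> 3 * n div 4 - 1" "3 * n div 4 - 1 < n"
proof -
  define q where "q = (2::nat) ^ (k - 2)"
  obtain j where "k = 2 + j" using le_Suc_ex[of 2 k] assms by auto
  then have n: "n = 4 * q" unfolding n_def q_def by (simp add: power_add)
  have "(m + 1) * s = 2 ^ (t - 1 + (k - t))" unfolding m_def s_def by (simp add: power_add)
  also have "t - 1 + (k - t) = Suc (k - 2)" using assms(1,2) by simp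
  finally have ms: "(m + 1) * s = 2 * q" unfolding q_def by simp
  have "(2::nat) ^ 1 \<le> 2 ^ (t - 1)" "(2::nat) ^ 1 \<le> s"
    unfolding s_def using assms(1,2) by (intro power_increasing; simp)+
  then show "0 < m" "2 \<le> s" unfolding m_def by simp_all
  then show "n div 4 + 1 + m * s \<le> 3 * n div 4 - 1" "3 * n div 4 - 1 < n"
    using n ms by (simp_all add: algebra_simps)
qed

theorem lemma3:
  fixes k :: nat and P :: "point set"
  assumes "k \<ge> 16"
    and "isothetic_horton k P"
  defines "n \<equiv> (2::nat) ^ k"
    and "t \<equiv> nat \<lceil>2 * log 2 (real k)\<rceil>"
  shows "point_set_size P \<ge> real n powr ((1/2) * log 2 (real n))
    \<or> (\<exists>a1 a2 a3 a4 :: real.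
          fst (xpt P (n div 4)) < a1 \<and> a1 < a2 \<and> a2 < a3 \<and> a3 < a4 \<and>
          a4 < fst (xpt P (3 * n div 4 - 1)) \<and>
          strip_count P a1 a2 = 2 ^ (k - t) \<and>
          strip_count P a3 a4 = 2 ^ (k - t) \<and>
          1/2 \<le> (a2 - a1) / (a4 - a3) \<and> (a2 - a1) / (a4 - a3) \<le> 2)"
proof -
  have P: "finite P" "card P = n" "distinct_x P" "\<forall>p\<in>P. fst p \<in> \<int>"
    using assms(2) horton_finite_card_distinct_x unfolding isothetic_horton_def n_def by auto
  have t: "real k ^ 2 \<le> 2 ^ t" "t + 4 \<le> k" "t < k" "2 \<le> t"
    using ceiling_two_log_bounds[OF assms(1)] unfolding t_def by auto
  define m where "m = (2::nat) ^ (t - 1) - 1"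
  define s where "s = (2::nat) ^ (k - t)"
  have fit: "0 < m" "2 \<le> s" "n div 4 + 1 + m * s \<le> 3 * n div 4 - 1" "3 * n div 4 - 1 < n"
    using runs_fit_between_quartiles[OF t(4,3)] unfolding n_def m_def s_def by simp_all
  from strips_comparable_or_wide[OF P(1,3,2,4) fit] show ?thesis
  proof (elim disjE bexE)
    fix p p' assume "p \<in> P" "p' \<in> P" "2 ^ (m - 1) * (real s - 1) \<le> fst p' - fst p"
    then have "2 ^ (m - 1) * (real s - 1) / 2 \<le> point_set_size P"
      using fst_diff_le_twice_point_set_size[OF P(1)] by fastforce
    moreover have "m - 1 = 2 ^ (t - 1) - 2" unfolding m_def by simp
    ultimately show ?thesis
      using size_threshold_le[OF t(4,2,1)] unfolding n_def s_def by simp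
  qed (unfold s_def, blast)
qed

end
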